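(* Let $p$ be a prime, $r\geq 1$ and $d\geq 0$. Then $$\sum_{\lambda\in\mathrm{Par}(d)}\Big(\sum_{i=0}^{r-1}l(\lambda^{(i)})+d_p(\lambda^{(r-1)})\Big)=l(d).$$
   Context: $\mathrm{Par}(d)$ is the set of partitions of $d$; $m_n(\lambda)$ denotes the multiplicity of the part $n$ in $\lambda$, $l(\lambda)$ the number of parts, and $l(d)=\sum_{\lambda\in\mathrm{Par}(d)}l(\lambda)$. The $p$-adic decomposition of $\lambda$ is $\lambda=\lambda^{(0)}+p\lambda^{(1)}+p^2\lambda^{(2)}+\cdots$, where each $\lambda^{(i)}$ is a partition with no part divisible by $p$, determined by $m_n(\lambda^{(i)})=m_{p^in}(\lambda)$ for all $n$ with $p\nmid n$ (so $\lambda^{(i)}$ consists of the parts of $\lambda$ of $p$-adic valuation exactly $i$, divided by $p^i$). For an integer $a\geq0$, $d_p(a)=\sum_{j\geq1}\lfloor a/p^j\rfloor$, and for a partition $\mu$, $d_p(\mu)=\sum_{n\geq1}d_p(m_n(\mu))$. *)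

theory Defs
  imports Main "HOL-Library.Multiset" "HOL-Computational_Algebra.Primes"
begin

definition Par :: "nat \<Rightarrow> nat multiset set" where
  "Par d = {la. (\<forall>n\<in>#la. 0 < n) \<and> sum_mset la = d}"

definition mult_part :: "nat \<Rightarrow> nat multiset \<Rightarrow> nat" where
  "mult_part n la = count la n"

definition len :: "nat multiset \<Rightarrow> nat" where
  "len la = size la"

definition len_total :: "nat \<Rightarrow> nat" where
  "len_total d = (\<Sum>la\<in>Par d. len la)"

definition padic_comp :: "nat \<Rightarrow> nat \<Rightarrow> nat multiset \<Rightarrow> nat multiset" where
  "padic_comp p i la =
     image_mset (\<lambda>n. n div p ^ i) (filter_mset (\<lambda>n. multiplicity p n = i) la)"

text \<open>d_p(a) = sum over j >= 1 of floor(a / p^j); only finitely many terms are nonzero.\<close>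
definition dp_nat :: "nat \<Rightarrow> nat \<Rightarrow> nat" where
  "dp_nat p a = (\<Sum>j\<in>{j. 1 \<le> j \<and> 0 < a div p ^ j}. a div p ^ j)"

definition dp_part :: "nat \<Rightarrow> nat multiset \<Rightarrow> nat" where
  "dp_part p \<mu> = (\<Sum>n\<in>set_mset \<mu>. dp_nat p (mult_part n \<mu>))"

end

theory Submission
  imports Defs
begin

(*
  Write G(m) for the total number of occurrences of the part m among all partitions
  of d, and v(m) for the p-adic valuation of m.  The theorem splits the parts of each
  partition by valuation:  the terms l(la^(i)) for i < r count the parts with
  valuation i < r, and we show that, summed over all partitions of d, the term
  d_p(la^(i)) counts exactly the parts of valuation > i.  With i = r - 1 the two
  contributions add up to the total number of parts, which is l(d).

  The heart of the argument is a Glaisher-type identity (sum_count_div_eq_sum_count):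
  for k, t > 0,  sum over la of floor(m_k(la)/t) = G(t*k), both sides counting the
  partitions of d - s*t*k for s = 1, 2, ...  Applied with t = p^j and k = p^i n,
  it turns the sum of d_p(la^(i)) into a sum of G over the numbers p^j p^i n (p not
  dividing n, j >= 1), which are exactly the numbers of valuation > i.
*)

lemma part_le_sum_mset: "(x::nat) \<in># M \<Longrightarrow> x \<le> sum_mset M"
  by (metis le_add1 sum_mset.remove)

lemma size_le_sum_mset: "\<forall>n\<in>#M. 0 < (n::nat) \<Longrightarrow> size M \<le> sum_mset M"
  by (induction M) auto

text \<open>Parts and multiplicities of a partition of d lie in 1..d, resp. 0..d; this lets
  all sums below range over the fixed finite set 1..d.\<close>
lemma Par_parts: "la \<in> Par d \<Longrightarrow> set_mset la \<subseteq> {1..d}"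
  using part_le_sum_mset by (fastforce simp: Par_def)

lemma Par_count_le: "la \<in> Par d \<Longrightarrow> count la k \<le> d"
  using count_le_size[of la k] size_le_sum_mset[of la] by (simp add: Par_def)

lemma finite_Par: "finite (Par d)"
proof (rule finite_subset)
  show "Par d \<subseteq> (\<Union>n\<in>{0..d}. multisets_of_size {1..d} n)"
  proof
    fix la assume la: "la \<in> Par d"
    then have "size la \<le> d" using size_le_sum_mset[of la] by (simp add: Par_def)
    with Par_parts[OF la] show "la \<in> (\<Union>n\<in>{0..d}. multisets_of_size {1..d} n)"
      by (auto simp: multisets_of_size_def)
  qed
qed auto

lemma size_filter_mset_eq_sum_count:
  assumes "set_mset M \<subseteq> A" "finite A"
  shows "size (filter_mset P M) = (\<Sum>m\<in>{m\<in>A. P m}. count M m)"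
proof -
  have "size (filter_mset P M) = (\<Sum>m\<in>set_mset (filter_mset P M). count M m)"
    by (simp add: size_multiset_overloaded_eq)
  also have "\<dots> = (\<Sum>m\<in>{m\<in>A. P m}. count M m)"
    using assms by (intro sum.mono_neutral_left) (auto simp: count_eq_zero_iff)
  finally show ?thesis .
qed

section \<open>A Glaisher-type identity\<close>

text \<open>Removing c copies of the part k is a bijection from the partitions of d with at
  least c parts equal to k onto the partitions of d - c k.\<close>
lemma card_Par_count_ge:
  assumes "k > 0"
  shows "card {la\<in>Par d. c \<le> count la k} = (if c*k \<le> d then card (Par (d - c*k)) else 0)"
proof -
  let ?R = "replicate_mset c k"
  have sub: "?R \<subseteq># la" if "c \<le> count la k" for la
    using that by (simp add: subseteq_mset_def)
  have sum: "sum_mset la = sum_mset (la - ?R) + c*k" if "c \<le> count la k" for la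
  proof -
    have "la = (la - ?R) + ?R" using sub[OF that] by (simp add: subset_mset.diff_add)
    then have "sum_mset la = sum_mset (la - ?R) + sum_mset ?R" by (metis sum_mset.union)
    then show ?thesis by simp
  qed
  show ?thesis
  proof (cases "c*k \<le> d")
    case True
    have "bij_betw (\<lambda>mu. mu + ?R) (Par (d - c*k)) {la\<in>Par d. c \<le> count la k}"
    proof (rule bij_betw_byWitness[where f' = "\<lambda>la. la - ?R"])
      show "\<forall>a\<in>Par (d - c * k). a + ?R - ?R = a" by simp
      show "\<forall>a\<in>{la \<in> Par d. c \<le> count la k}. a - ?R + ?R = a"
        using sub by (auto intro: subset_mset.diff_add)
      show "(\<lambda>mu. mu + ?R) ` Par (d - c * k) \<subseteq> {la \<in> Par d. c \<le> count la k}"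
        using True assms by (auto simp: Par_def split: if_splits)
      show "(\<lambda>la. la - ?R) ` {la \<in> Par d. c \<le> count la k} \<subseteq> Par (d - c * k)"
      proof safe
        fix la assume la: "la \<in> Par d" "c \<le> count la k"
        then show "la - ?R \<in> Par (d - c * k)"
          using sum[OF la(2)] by (auto simp: Par_def dest: in_diffD)
      qed
    qed
    then show ?thesis using True by (simp add: bij_betw_same_card)
  next
    case False
    have empty: "{la\<in>Par d. c \<le> count la k} = {}"
    proof safe
      fix la assume "la \<in> Par d" "c \<le> count la k"
      then show "la \<in> {}" using sum False by (force simp: Par_def)
    qed
    show ?thesis using False by (subst empty) simp
  qed
qed

lemma card_filter_eq_sum: "finite A \<Longrightarrow> card {x\<in>A. P x} = (\<Sum>x\<in>A. if P x then 1 else 0)"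
  by (simp add: sum.inter_filter[symmetric])

lemma div_eq_card:
  assumes "(a::nat) \<le> d" "t > 0"
  shows "a div t = card {s\<in>{1..d}. s*t \<le> a}"
proof -
  have "s \<le> d" if "s*t \<le> a" for s
  proof -
    have "s \<le> s*t" using assms(2) by simp
    then show ?thesis using that assms(1) by linarith
  qed
  moreover have "a div t \<le> d" using assms(1) div_le_dividend order_trans by blast
  ultimately have "{s\<in>{1..d}. s*t \<le> a} = {1..a div t}"
    using assms(2) by (auto simp: less_eq_div_iff_mult_less_eq)
  then show ?thesis by simp
qed

lemma sum_count_div:
  assumes "t > 0"
  shows "(\<Sum>la\<in>Par d. count la k div t) = (\<Sum>s\<in>{1..d}. card {la\<in>Par d. s*t \<le> count la k})"
proof -
  have "(\<Sum>la\<in>Par d. count la k div t)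
      = (\<Sum>la\<in>Par d. \<Sum>s\<in>{1..d}. if s*t \<le> count la k then 1 else 0)"
  proof (rule sum.cong)
    fix la assume la: "la \<in> Par d"
    have "count la k div t = card {s\<in>{1..d}. s*t \<le> count la k}"
      by (rule div_eq_card[OF Par_count_le[OF la] assms])
    also have "\<dots> = (\<Sum>s\<in>{1..d}. if s*t \<le> count la k then 1 else 0)"
      by (rule card_filter_eq_sum) simp
    finally show "count la k div t = (\<Sum>s\<in>{1..d}. if s*t \<le> count la k then 1 else 0)" .
  qed simp
  also have "\<dots> = (\<Sum>s\<in>{1..d}. \<Sum>la\<in>Par d. if s*t \<le> count la k then 1 else 0)"
    by (rule sum.swap)
  also have "\<dots> = (\<Sum>s\<in>{1..d}. card {la\<in>Par d. s*t \<le> count la k})"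
    by (simp add: card_filter_eq_sum finite_Par)
  finally show ?thesis .
qed

lemma sum_count_div_eq_sum_count:
  assumes "k > 0" "t > 0"
  shows "(\<Sum>la\<in>Par d. count la k div t) = (\<Sum>la\<in>Par d. count la (t*k))"
proof -
  have "card {la\<in>Par d. s*t \<le> count la k} = card {la\<in>Par d. s*1 \<le> count la (t*k)}" for s
    using assms by (simp add: card_Par_count_ge mult.assoc)
  then show ?thesis
    using sum_count_div[where t=t and d=d and k=k] sum_count_div[where t=1 and d=d and k="t*k"] assms
    by simp
qed

text \<open>j < p^j for p \<ge> 2; used to bound the relevant exponents j by d.\<close>
lemma exponent_lt_power: "2 \<le> (p::nat) \<Longrightarrow> j < p^j"
  using less_exp[of j] power_mono[of 2 p j] by linarith

lemma dp_nat_eq_sum: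
  assumes "2 \<le> p" "a \<le> d"
  shows "dp_nat p a = (\<Sum>j\<in>{1..d}. a div p^j)"
  unfolding dp_nat_def
proof (rule sum.mono_neutral_left)
  show "{j. 1 \<le> j \<and> 0 < a div p ^ j} \<subseteq> {1..d}"
  proof safe
    fix j assume "1 \<le> j" "0 < a div p ^ j"
    then have "j < p^j" "p^j \<le> a" using exponent_lt_power[OF assms(1)] by (auto simp: div_greater_zero_iff)
    then show "j \<in> {1..d}" using \<open>1 \<le> j\<close> assms(2) by simp
  qed
qed auto

lemma dp_nat_0: "dp_nat p 0 = 0"
  by (simp add: dp_nat_def)

text \<open>d_p of a partition only depends on the multiplicities, not on the parts.\<close>
lemma dp_part_image_inj:
  assumes "inj f"
  shows "dp_part p (image_mset f mu) = dp_part p mu"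
proof -
  have count_image: "count (image_mset f mu) (f n) = count mu n" for n
    using assms by (induction mu) (auto simp: inj_eq)
  have "dp_part p (image_mset f mu) = (\<Sum>m\<in>f ` set_mset mu. dp_nat p (count (image_mset f mu) m))"
    by (simp add: dp_part_def mult_part_def)
  also have "\<dots> = dp_part p mu"
    using assms by (simp add: sum.reindex inj_on_def count_image dp_part_def mult_part_def)
  finally show ?thesis .
qed

lemma dp_part_filter:
  "dp_part p (filter_mset P mu) = (\<Sum>n\<in>{n\<in>set_mset mu. P n}. dp_nat p (count mu n))"
  by (simp add: dp_part_def mult_part_def)

lemma image_padic_comp:
  "image_mset (\<lambda>n. p^i * n) (padic_comp p i la) = filter_mset (\<lambda>n. multiplicity p n = i) la"
    (is "_ = ?F")
proof -
  have "image_mset (\<lambda>n. p^i * n) (padic_comp p i la) = image_mset (\<lambda>n. p^i * (n div p^i)) ?F"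
    by (simp add: padic_comp_def image_mset.compositionality comp_def)
  also have "\<dots> = image_mset id ?F"
    using multiplicity_dvd[of p] by (intro image_mset_cong) auto
  finally show ?thesis by simp
qed

lemma dp_part_padic_comp:
  assumes "p > 0"
  shows "dp_part p (padic_comp p i la)
       = (\<Sum>n\<in>{n\<in>set_mset la. multiplicity p n = i}. dp_nat p (count la n))"
proof -
  have "inj (\<lambda>n. p^i * n)" using assms by (simp add: inj_on_def)
  then have "dp_part p (padic_comp p i la) = dp_part p (image_mset (\<lambda>n. p^i * n) (padic_comp p i la))"
    by (simp add: dp_part_image_inj)
  then show ?thesis by (simp add: image_padic_comp dp_part_filter)
qed

lemma size_filter_mset_ge_split:
  "size (filter_mset (\<lambda>m. i \<le> f m) M)
     = size (filter_mset (\<lambda>m. f m = i) M) + size (filter_mset (\<lambda>m. Suc i \<le> f m) M)"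
  by (induction M) auto

lemma len_padic_decomp:
  "len la = (\<Sum>i<r. len (padic_comp p i la)) + size (filter_mset (\<lambda>m. r \<le> multiplicity p m) la)"
proof (induction r)
  case (Suc r)
  then show ?case using size_filter_mset_ge_split[of r "multiplicity p" la]
    by (simp add: len_def padic_comp_def)
qed (simp add: len_def)

section \<open>Reindexing by valuation\<close>

lemma multiplicity_power_mult:
  assumes "prime (p::nat)" "m \<noteq> 0"
  shows "multiplicity p (p^j * m) = j + multiplicity p m"
  using assms by (simp add: prime_elem_multiplicity_mult_distrib prime_gt_0_nat)

lemma multiplicity_lt_self:
  assumes "prime (p::nat)" "m > 0"
  shows "multiplicity p m < m"
proof -
  have "multiplicity p m < p ^ multiplicity p m"
    using exponent_lt_power prime_ge_2_nat[OF assms(1)] by blast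
  also have "\<dots> \<le> m"
    using multiplicity_dvd[of p m] assms(2) by (rule dvd_imp_le)
  finally show ?thesis .
qed

text \<open>Every m of valuation greater than i is uniquely p^j n with j \<ge> 1 and n of
  valuation i; so summing g(p^j n) over such pairs is summing g over the numbers of
  valuation > i, provided g vanishes beyond d.\<close>
lemma sum_reindex_valuation:
  fixes g :: "nat \<Rightarrow> nat"
  assumes p: "prime p" and g: "\<And>m. d < m \<Longrightarrow> g m = 0"
  shows "(\<Sum>n\<in>{n\<in>{1..d}. multiplicity p n = i}. \<Sum>j\<in>{1..d}. g (p^j * n))
       = (\<Sum>m\<in>{m\<in>{1..d}. i < multiplicity p m}. g m)"
    (is "(\<Sum>n\<in>?S. \<Sum>j\<in>?J. _) = (\<Sum>m\<in>?T. _)")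
proof -
  let ?v = "multiplicity p"
  let ?D = "{(n, j)\<in>?S \<times> ?J. p^j * n \<le> d}"
  have "(\<Sum>n\<in>?S. \<Sum>j\<in>?J. g (p^j * n)) = (\<Sum>(n, j)\<in>?S \<times> ?J. g (p^j * n))"
    by (simp add: sum.cartesian_product)
  also have "\<dots> = (\<Sum>(n, j)\<in>?D. g (p^j * n))"
  proof (rule sum.mono_neutral_right)
    have "m \<le> d" if "0 < g m" for m using g[of m] that by (cases "d < m") auto
    then show "\<forall>x\<in>?S \<times> ?J - ?D. (\<lambda>(n, j). g (p^j * n)) x = 0" by auto
  qed auto
  also have "\<dots> = (\<Sum>m\<in>?T. g m)"
  proof (rule sum.reindex_bij_witness[where j = "\<lambda>(n, j). p^j * n"
                                       and i = "\<lambda>m. (m div p^(?v m - i), ?v m - i)"])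
    fix a assume "a \<in> ?D"
    then obtain n j where a: "a = (n, j)" "n \<in> ?S" "j \<in> ?J" "p^j * n \<le> d" by auto
    then have v: "?v (p^j * n) = j + i" using multiplicity_power_mult[OF p] by auto
    show "(\<lambda>m. (m div p^(?v m - i), ?v m - i)) ((\<lambda>(n, j). p^j * n) a) = a"
      using a v p by (simp add: prime_gt_0_nat)
    show "(\<lambda>(n, j). p^j * n) a \<in> ?T"
      using a v p by (simp add: prime_gt_0_nat Suc_le_eq)
  next
    fix m assume m: "m \<in> ?T"
    define k where "k = ?v m - i"
    define n where "n = m div p^k"
    have witness: "(\<lambda>m. (m div p^(?v m - i), ?v m - i)) m = (n, k)"
      by (simp add: n_def k_def)
    have mk: "p^k * n = m"
      using multiplicity_dvd'[of k p m] by (simp add: n_def k_def)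
    then have n0: "n \<noteq> 0" using m by auto
    have "?v m = k + ?v n" using multiplicity_power_mult[OF p n0, of k] by (simp only: mk)
    moreover have "i < ?v m" using m by simp
    ultimately have "?v n = i" "1 \<le> k" unfolding k_def by linarith+
    moreover have "k \<le> d"
      using multiplicity_lt_self[OF p, of m] m unfolding k_def by auto
    moreover have "n \<le> m"
    proof (rule dvd_imp_le)
      show "n dvd m" using mk by (metis dvd_triv_right)
    qed (use m in auto)
    ultimately show "(\<lambda>m. (m div p^(?v m - i), ?v m - i)) m \<in> ?D"
      unfolding witness using m n0 mk by auto
    show "(\<lambda>(n, j). p^j * n) ((\<lambda>m. (m div p^(?v m - i), ?v m - i)) m) = m"
      unfolding witness using mk by simp
  qed (simp split: prod.splits)
  finally show ?thesis .
qed

lemma sum_dp_padic_comp: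
  assumes p: "prime p"
  shows "(\<Sum>la\<in>Par d. dp_part p (padic_comp p i la))
       = (\<Sum>la\<in>Par d. size (filter_mset (\<lambda>m. i < multiplicity p m) la))"
proof -
  let ?S = "{n\<in>{1..d}. multiplicity p n = i}"
  let ?T = "{m\<in>{1..d}. i < multiplicity p m}"
  let ?G = "\<lambda>m. \<Sum>la\<in>Par d. count la m"
  have p2: "2 \<le> p" and p0: "p > 0" using p prime_ge_2_nat prime_gt_0_nat by auto
  have comp: "dp_part p (padic_comp p i la) = (\<Sum>n\<in>?S. \<Sum>j\<in>{1..d}. count la n div p^j)"
    if la: "la \<in> Par d" for la
  proof -
    have "dp_part p (padic_comp p i la) = (\<Sum>n\<in>?S. dp_nat p (count la n))"
      unfolding dp_part_padic_comp[OF p0]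
    proof (rule sum.mono_neutral_left)
      show "{n \<in> set_mset la. multiplicity p n = i} \<subseteq> ?S" using Par_parts[OF la] by auto
      show "\<forall>n\<in>?S - {n \<in> set_mset la. multiplicity p n = i}. dp_nat p (count la n) = 0"
      proof
        fix n assume "n \<in> ?S - {n \<in> set_mset la. multiplicity p n = i}"
        then have "count la n = 0" by (auto simp: not_in_iff)
        then show "dp_nat p (count la n) = 0" by (simp add: dp_nat_0)
      qed
    qed simp
    then show ?thesis using dp_nat_eq_sum[OF p2 Par_count_le[OF la]] by simp
  qed
  have "(\<Sum>la\<in>Par d. dp_part p (padic_comp p i la))
      = (\<Sum>n\<in>?S. \<Sum>j\<in>{1..d}. \<Sum>la\<in>Par d. count la n div p^j)"
    by (simp add: comp sum.swap[of _ "Par d"])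
  also have "\<dots> = (\<Sum>n\<in>?S. \<Sum>j\<in>{1..d}. ?G (p^j * n))"
    using p0 by (intro sum.cong refl sum_count_div_eq_sum_count) auto
  also have "\<dots> = (\<Sum>m\<in>?T. ?G m)"
    using Par_parts by (intro sum_reindex_valuation[OF p]) (fastforce intro!: sum.neutral simp: count_eq_zero_iff)
  also have "\<dots> = (\<Sum>la\<in>Par d. \<Sum>m\<in>?T. count la m)"
    by (rule sum.swap)
  also have "\<dots> = (\<Sum>la\<in>Par d. size (filter_mset (\<lambda>m. i < multiplicity p m) la))"
    by (intro sum.cong refl size_filter_mset_eq_sum_count[symmetric] Par_parts) auto
  finally show ?thesis .
qed

theorem mainTheorem4:
  fixes p r d :: nat
  assumes "prime p" and "r \<ge> 1"
  shows "(\<Sum>la\<in>Par d. (\<Sum>i<r. len (padic_comp p i la)) + dp_part p (padic_comp p (r - 1) la))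
         = len_total d"
proof -
  have "r - 1 < m \<longleftrightarrow> r \<le> m" for m using assms(2) by linarith
  then have "(\<Sum>la\<in>Par d. dp_part p (padic_comp p (r - 1) la))
           = (\<Sum>la\<in>Par d. size (filter_mset (\<lambda>m. r \<le> multiplicity p m) la))"
    by (simp add: sum_dp_padic_comp[OF assms(1)])
  then have "(\<Sum>la\<in>Par d. (\<Sum>i<r. len (padic_comp p i la)) + dp_part p (padic_comp p (r - 1) la))
           = (\<Sum>la\<in>Par d. (\<Sum>i<r. len (padic_comp p i la))
                            + size (filter_mset (\<lambda>m. r \<le> multiplicity p m) la))"
    by (simp add: sum.distrib)
  also have "\<dots> = len_total d"
    unfolding len_total_def by (rule sum.cong[OF refl], rule len_padic_decomp[symmetric])
  finally show ?thesis .
qed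

end
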